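(* Let $G_1,G_2$ be ordered graphs, and let $L_1,L_2$ be the lengths of the longest monotone paths in $G_1,G_2$ respectively. Then the length of the longest monotone path in the lexicographic product $G_1\otimes G_2$ is exactly $L_1L_2$.
   Context: An ordered graph is a finite graph with a linear order on its vertex set. A path $v_1,\dots,v_L$ in an ordered graph is monotone if $v_1<v_2<\dots<v_L$ in the order; its length is its number of vertices. The lexicographic product $G_1\otimes G_2$ is the ordered graph on vertex set $V(G_2)\times V(G_1)$, ordered lexicographically with the $G_2$-coordinate compared first, in which $(u,x)$ and $(w,y)$ are adjacent if and only if either $u\neq w$ and $uw\in E(G_2)$, or $u=w$ and $xy\in E(G_1)$. (Equivalently: each vertex of $G_2$ is blown up into an interval of $|G_1|$ vertices, edges of $G_2$ become complete bipartite graphs between blowup sets, and a copy of $G_1$ is placed in each blowup set.) *)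

theory Defs
  imports Main "HOL-Library.Product_Lexorder"
begin

text \<open>An ordered graph: finite vertex set V inside a linearly ordered type
(the linear order on V is the restriction of the type's order), with a symmetric,
irreflexive adjacency relation E supported on V.\<close>
definition ordered_graph :: "'a::linorder set \<Rightarrow> ('a \<Rightarrow> 'a \<Rightarrow> bool) \<Rightarrow> bool" where
  "ordered_graph V E \<longleftrightarrow> finite V \<and> (\<forall>x y. E x y \<longrightarrow> x \<in> V \<and> y \<in> V)
     \<and> (\<forall>x y. E x y \<longrightarrow> E y x) \<and> (\<forall>x. \<not> E x x)"

text \<open>A monotone path v_1 < v_2 < ... < v_L, consecutive vertices adjacent;
its length is its number of vertices.\<close>
definition monotone_path :: "'a::linorder set \<Rightarrow> ('a \<Rightarrow> 'a \<Rightarrow> bool) \<Rightarrow> 'a list \<Rightarrow> bool" where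
  "monotone_path V E vs \<longleftrightarrow> vs \<noteq> [] \<and> set vs \<subseteq> V \<and> sorted_wrt (<) vs
     \<and> (\<forall>i. Suc i < length vs \<longrightarrow> E (vs ! i) (vs ! Suc i))"

definition longest_monotone_path :: "'a::linorder set \<Rightarrow> ('a \<Rightarrow> 'a \<Rightarrow> bool) \<Rightarrow> nat" where
  "longest_monotone_path V E = Max (insert 0 {length vs | vs. monotone_path V E vs})"

text \<open>Lexicographic product G1 \<otimes> G2 on V2 \<times> V1; pairs are ordered lexicographically
(first coordinate, the G2-coordinate, compared first) by Product_Lexorder.\<close>
definition lex_prod_vertices :: "'a set \<Rightarrow> 'b set \<Rightarrow> ('b \<times> 'a) set" where
  "lex_prod_vertices V1 V2 = V2 \<times> V1"

definition lex_prod_edges :: "('a \<Rightarrow> 'a \<Rightarrow> bool) \<Rightarrow> ('b \<Rightarrow> 'b \<Rightarrow> bool)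
    \<Rightarrow> ('b \<times> 'a) \<Rightarrow> ('b \<times> 'a) \<Rightarrow> bool" where
  "lex_prod_edges E1 E2 p q \<longleftrightarrow>
     (fst p \<noteq> fst q \<and> E2 (fst p) (fst q)) \<or> (fst p = fst q \<and> E1 (snd p) (snd q))"

end

theory Submission
  imports Defs
begin

text \<open>A monotone path in \<open>G\<^sub>1 \<otimes> G\<^sub>2\<close> visits the blowup sets of a monotone
  path of \<open>G\<^sub>2\<close> in increasing order, and inside each blowup set it is a monotone path
  of \<open>G\<^sub>1\<close>; hence it has at most \<open>L\<^sub>1 L\<^sub>2\<close> vertices. Conversely, running through a longest
  path of \<open>G\<^sub>1\<close> inside the blowup set of each vertex of a longest path of \<open>G\<^sub>2\<close>, in order,
  gives a monotone path with exactly \<open>L\<^sub>1 L\<^sub>2\<close> vertices.\<close>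

definition monotone_edge :: "('a::linorder \<Rightarrow> 'a \<Rightarrow> bool) \<Rightarrow> 'a \<Rightarrow> 'a \<Rightarrow> bool" where
  "monotone_edge E x y \<longleftrightarrow> x < y \<and> E x y"

lemma monotone_path_iff_successively:
  "monotone_path V E vs \<longleftrightarrow> vs \<noteq> [] \<and> set vs \<subseteq> V \<and> successively (monotone_edge E) vs"
proof -
  have "sorted_wrt (<) vs \<longleftrightarrow> successively (<) vs"
    by (simp add: successively_conv_sorted_wrt transp_def)
  then show ?thesis
    unfolding monotone_path_def monotone_edge_def successively_conv_nth by blast
qed

lemma monotone_path_singleton [simp]: "monotone_path V E [x] \<longleftrightarrow> x \<in> V"
  by (simp add: monotone_path_def)

lemma monotone_path_Cons_Cons:
  "monotone_path V E (x # y # ys) \<longleftrightarrow>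
     x \<in> V \<and> monotone_edge E x y \<and> monotone_path V E (y # ys)"
  by (auto simp: monotone_path_iff_successively)

lemma monotone_path_length_le_card:
  assumes "finite V" "monotone_path V E vs"
  shows "length vs \<le> card V"
proof -
  from assms(2) have "distinct vs" "set vs \<subseteq> V"
    by (auto simp: monotone_path_def strict_sorted_iff)
  then show ?thesis
    using assms(1) by (metis card_mono distinct_card)
qed

lemma finite_monotone_path_lengths:
  assumes "finite V"
  shows "finite {length vs | vs. monotone_path V E vs}"
proof (rule finite_subset)
  show "{length vs | vs. monotone_path V E vs} \<subseteq> {..card V}"
    using monotone_path_length_le_card[OF assms] by blast
qed simp

lemma length_le_longest_monotone_path:
  assumes "finite V" "monotone_path V E vs"
  shows "length vs \<le> longest_monotone_path V E"
  unfolding longest_monotone_path_def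
  using assms finite_monotone_path_lengths[OF assms(1)] by (intro Max_ge) auto

lemma longest_monotone_path_le:
  assumes "finite V" "\<And>vs. monotone_path V E vs \<Longrightarrow> length vs \<le> n"
  shows "longest_monotone_path V E \<le> n"
  unfolding longest_monotone_path_def
  using assms finite_monotone_path_lengths[OF assms(1)] by (intro Max.boundedI) auto

lemma longest_monotone_path_attained:
  assumes "finite V" "longest_monotone_path V E > 0"
  obtains vs where "monotone_path V E vs" "length vs = longest_monotone_path V E"
proof -
  have "longest_monotone_path V E \<in> insert 0 {length vs | vs. monotone_path V E vs}"
    unfolding longest_monotone_path_def
    using finite_monotone_path_lengths[OF assms(1)] by (intro Max_in) auto
  with assms(2) that show ?thesis by auto
qed

lemma monotone_edge_lex_prod_edges:
  "monotone_edge (lex_prod_edges E1 E2) v w \<longleftrightarrow>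
     (fst v = fst w \<and> monotone_edge E1 (snd v) (snd w)) \<or>
     (fst v \<noteq> fst w \<and> monotone_edge E2 (fst v) (fst w))"
  by (cases v; cases w) (auto simp: monotone_edge_def lex_prod_edges_def less_prod_def)

text \<open>In the induction, \<open>ps\<close> is the sequence of blowup sets visited by \<open>vs\<close> and \<open>qs\<close> the
  projection of the part of \<open>vs\<close> in the first of them; every later block contributes at
  most \<open>L\<^sub>1\<close> vertices.\<close>

lemma lex_prod_path_projections:
  assumes "finite V1"
  shows "monotone_path (lex_prod_vertices V1 V2) (lex_prod_edges E1 E2) vs \<Longrightarrow>
    \<exists>ps qs. monotone_path V2 E2 ps \<and> hd ps = fst (hd vs) \<and>
      monotone_path V1 E1 qs \<and> hd qs = snd (hd vs) \<and>
      length vs + longest_monotone_path V1 E1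
        \<le> longest_monotone_path V1 E1 * length ps + length qs"
proof (induction vs rule: induct_list012)
  case 1
  then show ?case by (simp add: monotone_path_def)
next
  case (2 v)
  then have "fst v \<in> V2" "snd v \<in> V1"
    by (auto simp: lex_prod_vertices_def mem_Times_iff)
  then show ?case
    by (intro exI[of _ "[fst v]"] exI[of _ "[snd v]"]) simp
next
  case (3 v w ws)
  let ?L1 = "longest_monotone_path V1 E1"
  from "3.prems" have vw: "monotone_edge (lex_prod_edges E1 E2) v w"
    and vV: "fst v \<in> V2" "snd v \<in> V1"
    and path: "monotone_path (lex_prod_vertices V1 V2) (lex_prod_edges E1 E2) (w # ws)"
    by (auto simp: monotone_path_Cons_Cons lex_prod_vertices_def mem_Times_iff)
  obtain ps qs where ps: "monotone_path V2 E2 ps" "hd ps = fst w"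
    and qs: "monotone_path V1 E1 qs" "hd qs = snd w"
    and len: "length (w # ws) + ?L1 \<le> ?L1 * length ps + length qs"
    using "3.IH"(2)[OF path] by auto
  obtain p ps' where ps_eq: "ps = p # ps'"
    using ps(1) by (cases ps) (auto simp: monotone_path_def)
  obtain q qs' where qs_eq: "qs = q # qs'"
    using qs(1) by (cases qs) (auto simp: monotone_path_def)
  show ?case
  proof (cases "fst v = fst w")
    case True
    with vw have "monotone_path V1 E1 (snd v # qs)"
      using qs vV by (simp add: qs_eq monotone_path_Cons_Cons monotone_edge_lex_prod_edges)
    with ps len True show ?thesis
      by (intro exI[of _ ps] exI[of _ "snd v # qs"]) auto
  next
    case False
    with vw have "monotone_path V2 E2 (fst v # ps)"
      using ps vV by (simp add: ps_eq monotone_path_Cons_Cons monotone_edge_lex_prod_edges)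
    moreover have "length (v # w # ws) + ?L1 \<le> ?L1 * length (fst v # ps) + length [snd v]"
      using len length_le_longest_monotone_path[OF assms(1) qs(1)] by simp
    ultimately show ?thesis
      using vV by (intro exI[of _ "fst v # ps"] exI[of _ "[snd v]"]) auto
  qed
qed

lemma lex_prod_path_length_le:
  assumes "finite V1" "finite V2"
    and "monotone_path (lex_prod_vertices V1 V2) (lex_prod_edges E1 E2) vs"
  shows "length vs \<le> longest_monotone_path V1 E1 * longest_monotone_path V2 E2"
proof -
  let ?L1 = "longest_monotone_path V1 E1"
  obtain ps qs where ps: "monotone_path V2 E2 ps" and qs: "monotone_path V1 E1 qs"
    and len: "length vs + ?L1 \<le> ?L1 * length ps + length qs"
    using lex_prod_path_projections[OF assms(1) assms(3)] by blast
  have "?L1 * length ps \<le> ?L1 * longest_monotone_path V2 E2"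
    using length_le_longest_monotone_path[OF assms(2) ps] by simp
  with len length_le_longest_monotone_path[OF assms(1) qs] show ?thesis
    by linarith
qed

definition blowup_path :: "'a list \<Rightarrow> 'b list \<Rightarrow> ('b \<times> 'a) list" where
  "blowup_path xs us = concat (map (\<lambda>u. map (Pair u) xs) us)"

lemma length_blowup_path [simp]: "length (blowup_path xs us) = length us * length xs"
  by (simp add: blowup_path_def length_concat comp_def sum_list_triv)

lemma monotone_path_blowup_path:
  assumes xs: "monotone_path V1 E1 xs" and us: "monotone_path V2 E2 us"
  shows "monotone_path (lex_prod_vertices V1 V2) (lex_prod_edges E1 E2) (blowup_path xs us)"
proof -
  have block: "monotone_path (lex_prod_vertices V1 V2) (lex_prod_edges E1 E2) (map (Pair u) xs)"
    if "u \<in> V2" for u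
    using xs that unfolding monotone_path_iff_successively
    by (auto simp: successively_map monotone_edge_lex_prod_edges lex_prod_vertices_def
        intro: successively_mono)
  obtain x xs' where xs_eq: "xs = x # xs'"
    using xs by (cases xs) (auto simp: monotone_path_def)
  from us show ?thesis
  proof (induction us rule: induct_list012)
    case 1
    then show ?case by (simp add: monotone_path_def)
  next
    case (2 u)
    then show ?case using block by (simp add: blowup_path_def)
  next
    case (3 u u' us)
    then have uu': "monotone_edge E2 u u'" "u \<in> V2"
      and IH: "monotone_path (lex_prod_vertices V1 V2) (lex_prod_edges E1 E2)
                 (blowup_path xs (u' # us))"
      by (auto simp: monotone_path_Cons_Cons)
    have unfold: "blowup_path xs (u # u' # us) = map (Pair u) xs @ blowup_path xs (u' # us)"
      by (simp add: blowup_path_def)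
    have "last (map (Pair u) xs) = (u, last xs)" "hd (blowup_path xs (u' # us)) = (u', x)"
      by (simp_all add: blowup_path_def xs_eq last_map)
    moreover have "monotone_edge (lex_prod_edges E1 E2) (u, last xs) (u', x)"
      unfolding monotone_edge_lex_prod_edges using uu'(1) by (auto simp: monotone_edge_def)
    ultimately show ?case
      using IH block[OF uu'(2)] unfolding unfold monotone_path_iff_successively
      by (auto simp: successively_append_iff)
  qed
qed

lemma lex_prod_longest_ge:
  assumes "finite V1" "finite V2"
  shows "longest_monotone_path V1 E1 * longest_monotone_path V2 E2
           \<le> longest_monotone_path (lex_prod_vertices V1 V2) (lex_prod_edges E1 E2)"
proof (cases "longest_monotone_path V1 E1 > 0 \<and> longest_monotone_path V2 E2 > 0")
  case True
  then obtain xs us where xs: "monotone_path V1 E1 xs" "length xs = longest_monotone_path V1 E1"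
    and us: "monotone_path V2 E2 us" "length us = longest_monotone_path V2 E2"
    using longest_monotone_path_attained assms by metis
  have "finite (lex_prod_vertices V1 V2)"
    using assms by (simp add: lex_prod_vertices_def)
  from length_le_longest_monotone_path[OF this monotone_path_blowup_path[OF xs(1) us(1)]]
  show ?thesis using xs(2) us(2) by (simp add: mult.commute)
qed auto

theorem proposition3p2:
  fixes V1 :: "'a::linorder set" and E1 :: "'a \<Rightarrow> 'a \<Rightarrow> bool"
    and V2 :: "'b::linorder set" and E2 :: "'b \<Rightarrow> 'b \<Rightarrow> bool"
  assumes "ordered_graph V1 E1" and "ordered_graph V2 E2"
  shows "longest_monotone_path (lex_prod_vertices V1 V2) (lex_prod_edges E1 E2)
           = longest_monotone_path V1 E1 * longest_monotone_path V2 E2"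
proof -
  have fin: "finite V1" "finite V2"
    using assms by (auto simp: ordered_graph_def)
  then have "finite (lex_prod_vertices V1 V2)"
    by (simp add: lex_prod_vertices_def)
  with fin show ?thesis
    by (intro antisym longest_monotone_path_le lex_prod_path_length_le lex_prod_longest_ge)
qed

end
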